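(* Let $(X,G)$ be a minimal topological dynamical system, $K\ge 2$, and $(x_1,\dots,x_K)\in RP_K(X,G)$. Then for any $\epsilon>0$ and any nonempty open set $U\subset X$, there exist $h\in G$ and nonempty open sets $V_k\subset B^X_\epsilon(x_k)$, $k=1,\dots,K$, such that $hV_k\subset U$ for all $k=1,\dots,K$.
   Context: $G$ is an infinite countable discrete group; a tds $(X,G)$ is a compact metric space $(X,d)$ with a $G$-action by homeomorphisms; minimal means no proper nonempty closed invariant subset. $B^X_\epsilon(x)$ is the open $\epsilon$-ball. $RP_K(X,G)$ is the set of $(x_1,\dots,x_K)\in X^K$ such that for every $\epsilon>0$ there exist $x_k'\in X$ and $g\in G$ with $d(x_k,x_k')\le\epsilon$ for $1\le k\le K$ and $d(gx'_{k_1},gx'_{k_2})\le\epsilon$ for $1\le k_1\le k_2\le K$. *)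

theory Defs
  imports "HOL-Analysis.Analysis" "HOL-Algebra.Group"
begin

text \<open>A topological dynamical system (X,G): X a compact subset of a metric space (so a compact
metric space with the induced metric), G an infinite countable discrete group (HOL-Algebra
group with countable infinite carrier), acting on X by homeomorphisms via act.\<close>

definition tds :: "('g, 'b) monoid_scheme \<Rightarrow> ('g \<Rightarrow> 'x::metric_space \<Rightarrow> 'x) \<Rightarrow> 'x set \<Rightarrow> bool" where
  "tds G act X \<longleftrightarrow>
     group G \<and> countable (carrier G) \<and> infinite (carrier G) \<and>
     compact X \<and> X \<noteq> {} \<and>
     (\<forall>g\<in>carrier G. homeomorphism X X (act g) (act (inv\<^bsub>G\<^esub> g))) \<and>
     (\<forall>x\<in>X. act \<one>\<^bsub>G\<^esub> x = x) \<and>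
     (\<forall>g\<in>carrier G. \<forall>h\<in>carrier G. \<forall>x\<in>X. act (g \<otimes>\<^bsub>G\<^esub> h) x = act g (act h x))"

definition minimal_tds :: "('g, 'b) monoid_scheme \<Rightarrow> ('g \<Rightarrow> 'x::metric_space \<Rightarrow> 'x) \<Rightarrow> 'x set \<Rightarrow> bool" where
  "minimal_tds G act X \<longleftrightarrow> tds G act X \<and>
     (\<forall>Y. Y \<subseteq> X \<and> closed Y \<and> Y \<noteq> {} \<and> (\<forall>g\<in>carrier G. act g ` Y \<subseteq> Y) \<longrightarrow> Y = X)"

text \<open>RP_K(X,G): K-tuples are represented as functions on indices {1..K}.\<close>
definition RP :: "nat \<Rightarrow> ('g, 'b) monoid_scheme \<Rightarrow> ('g \<Rightarrow> 'x::metric_space \<Rightarrow> 'x) \<Rightarrow> 'x set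
                  \<Rightarrow> (nat \<Rightarrow> 'x) set" where
  "RP K G act X = {x. (\<forall>k\<in>{1..K}. x k \<in> X) \<and>
     (\<forall>\<epsilon>>0. \<exists>x'. \<exists>g\<in>carrier G. (\<forall>k\<in>{1..K}. x' k \<in> X \<and> dist (x k) (x' k) \<le> \<epsilon>) \<and>
        (\<forall>k1\<in>{1..K}. \<forall>k2\<in>{1..K}. k1 \<le> k2 \<longrightarrow> dist (act g (x' k1)) (act g (x' k2)) \<le> \<epsilon>))}"

definition ballX :: "'x::metric_space set \<Rightarrow> 'x \<Rightarrow> real \<Rightarrow> 'x set" where
  "ballX X x \<epsilon> = {y\<in>X. dist x y < \<epsilon>}"

end

theory Submission
  imports Defs
begin

text \<open>By minimality the translates \<open>g\<^sup>-\<^sup>1 U\<close> cover the compact space \<open>X\<close>, so there is a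
Lebesgue number \<open>\<delta>\<close>: every \<open>\<delta>\<close>-ball of \<open>X\<close> is moved into \<open>U\<close> by a single group element.
Since \<open>x\<close> is regionally proximal, there are \<open>x\<^sub>k'\<close> close to \<open>x\<^sub>k\<close> and \<open>g\<close> such that all
\<open>g x\<^sub>k'\<close> lie in one \<open>\<delta>\<close>-ball; if \<open>g\<^sub>0\<close> moves this ball into \<open>U\<close>, then \<open>h = g\<^sub>0 g\<close> maps every
\<open>x\<^sub>k'\<close> into \<open>U\<close>, and \<open>V\<^sub>k\<close> can be taken as the part of the \<open>\<epsilon>\<close>-ball around \<open>x\<^sub>k\<close> that \<open>h\<close>
maps into \<open>U\<close>.\<close>

lemma Lebesgue_number_openin:
  fixes S :: "'a::metric_space set"
  assumes "compact S" "S \<subseteq> \<Union>\<C>" "\<And>C. C \<in> \<C> \<Longrightarrow> openin (top_of_set S) C"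
  obtains \<delta> where "\<delta> > 0" "\<And>x. x \<in> S \<Longrightarrow> \<exists>C\<in>\<C>. S \<inter> ball x \<delta> \<subseteq> C"
proof -
  have "\<forall>C\<in>\<C>. \<exists>T. open T \<and> C = S \<inter> T"
    using assms(3) by (auto simp: openin_open)
  then obtain T where T: "\<And>C. C \<in> \<C> \<Longrightarrow> open (T C) \<and> C = S \<inter> T C"
    by metis
  have "S \<subseteq> \<Union>(T ` \<C>)"
    using assms(2) T by blast
  then obtain \<delta> where "\<delta> > 0" and \<delta>: "\<And>x. x \<in> S \<Longrightarrow> \<exists>B\<in>T ` \<C>. ball x \<delta> \<subseteq> B"
    using Heine_Borel_lemma[OF assms(1)] T by blast
  show thesis
  proof (rule that[OF \<open>\<delta> > 0\<close>])
    fix x assume "x \<in> S"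
    then obtain C where "C \<in> \<C>" "ball x \<delta> \<subseteq> T C"
      using \<delta> by blast
    then show "\<exists>C\<in>\<C>. S \<inter> ball x \<delta> \<subseteq> C"
      using T by blast
  qed
qed

lemma openin_ballX: "openin (top_of_set X) (ballX X x \<epsilon>)"
proof -
  have "ballX X x \<epsilon> = X \<inter> ball x \<epsilon>"
    unfolding ballX_def by auto
  then show ?thesis
    by (auto simp: openin_open_Int)
qed

lemma minimal_tds_imp_tds: "minimal_tds G act X \<Longrightarrow> tds G act X"
  unfolding minimal_tds_def by blast

lemma tds_act_in:
  assumes "tds G act X" "g \<in> carrier G" "y \<in> X"
  shows "act g y \<in> X"
  using assms unfolding tds_def homeomorphism_def by blast

lemma tds_act_mult:
  assumes "tds G act X" "g \<in> carrier G" "h \<in> carrier G" "y \<in> X"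
  shows "act (g \<otimes>\<^bsub>G\<^esub> h) y = act g (act h y)"
  using assms unfolding tds_def by blast

lemma tds_mult_closed:
  assumes "tds G act X" "g \<in> carrier G" "h \<in> carrier G"
  shows "g \<otimes>\<^bsub>G\<^esub> h \<in> carrier G"
  using assms unfolding tds_def by (simp add: group.is_monoid monoid.m_closed)

lemma tds_openin_preimage:
  assumes "tds G act X" "g \<in> carrier G" "openin (top_of_set X) U"
  shows "openin (top_of_set X) {y \<in> X. act g y \<in> U}"
proof -
  have "continuous_on X (act g)"
    using assms(1,2) unfolding tds_def homeomorphism_def by blast
  moreover have "act g \<in> X \<rightarrow> X"
    using tds_act_in[OF assms(1,2)] by blast
  ultimately have "openin (top_of_set X) (X \<inter> act g -` U)"
    using assms(3) by (rule continuous_openin_preimage)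
  moreover have "X \<inter> act g -` U = {y \<in> X. act g y \<in> U}"
    by blast
  ultimately show ?thesis
    by simp
qed

lemma minimal_tds_translates_cover:
  assumes min: "minimal_tds G act X"
    and U: "openin (top_of_set X) U" "U \<noteq> {}"
  shows "X \<subseteq> (\<Union>g\<in>carrier G. {y \<in> X. act g y \<in> U})"
proof (rule ccontr)
  assume not_cover: "\<not> ?thesis"
  have tds: "tds G act X"
    using min by (rule minimal_tds_imp_tds)
  have minimal: "\<And>Y. Y \<subseteq> X \<Longrightarrow> closed Y \<Longrightarrow> Y \<noteq> {} \<Longrightarrow>
                   (\<forall>g\<in>carrier G. act g ` Y \<subseteq> Y) \<Longrightarrow> Y = X"
    using min unfolding minimal_tds_def by auto
  define Y where "Y = X - (\<Union>g\<in>carrier G. {y \<in> X. act g y \<in> U})"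
  have "openin (top_of_set X) (\<Union>g\<in>carrier G. {y \<in> X. act g y \<in> U})"
    using tds_openin_preimage[OF tds _ U(1)] by (intro openin_Union) auto
  then have "closedin (top_of_set X) Y"
    unfolding Y_def using closedin_diff[OF closedin_topspace, of "top_of_set X"] by simp
  moreover have "compact X"
    using tds unfolding tds_def by blast
  ultimately have "closed Y"
    using closedin_closed_trans compact_imp_closed by blast
  moreover have "act h ` Y \<subseteq> Y" if h: "h \<in> carrier G" for h
  proof clarify
    fix y assume y: "y \<in> Y"
    then have "y \<in> X"
      unfolding Y_def by blast
    have "act g (act h y) \<notin> U" if g: "g \<in> carrier G" for g
    proof -
      have "act (g \<otimes>\<^bsub>G\<^esub> h) y \<notin> U"
        using y tds_mult_closed[OF tds g h] unfolding Y_def by blast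
      then show ?thesis
        by (simp add: tds_act_mult[OF tds g h \<open>y \<in> X\<close>])
    qed
    then show "act h y \<in> Y"
      using tds_act_in[OF tds h \<open>y \<in> X\<close>] unfolding Y_def by blast
  qed
  moreover have "Y \<noteq> {}"
    using not_cover unfolding Y_def by blast
  moreover have "Y \<subseteq> X"
    unfolding Y_def by blast
  ultimately have "Y = X"
    using minimal by blast
  obtain u where u: "u \<in> U"
    using U(2) by blast
  then have "u \<in> X"
    using openin_imp_subset[OF U(1)] by blast
  moreover have "\<one>\<^bsub>G\<^esub> \<in> carrier G" "act \<one>\<^bsub>G\<^esub> u = u"
    using tds \<open>u \<in> X\<close> unfolding tds_def by (auto simp: group.is_monoid monoid.one_closed)
  ultimately have "u \<notin> Y"
    using u unfolding Y_def by force
  then show False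
    using \<open>Y = X\<close> \<open>u \<in> X\<close> by blast
qed

lemma minimal_tds_uniform_return:
  assumes min: "minimal_tds G act X"
    and U: "openin (top_of_set X) U" "U \<noteq> {}"
  obtains \<delta> where "\<delta> > 0" "\<And>y. y \<in> X \<Longrightarrow> \<exists>g\<in>carrier G. act g ` ballX X y \<delta> \<subseteq> U"
proof -
  have tds: "tds G act X"
    using min by (rule minimal_tds_imp_tds)
  then have "compact X"
    unfolding tds_def by blast
  moreover note minimal_tds_translates_cover[OF min U]
  moreover have "\<And>C. C \<in> (\<lambda>g. {y \<in> X. act g y \<in> U}) ` carrier G \<Longrightarrow> openin (top_of_set X) C"
    using tds_openin_preimage[OF tds _ U(1)] by blast
  ultimately obtain \<delta> where "\<delta> > 0"
    and \<delta>: "\<And>y. y \<in> X \<Longrightarrow> \<exists>C\<in>(\<lambda>g. {y \<in> X. act g y \<in> U}) ` carrier G. X \<inter> ball y \<delta> \<subseteq> C"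
    by (rule Lebesgue_number_openin) blast+
  show thesis
  proof (rule that[OF \<open>\<delta> > 0\<close>])
    fix y assume "y \<in> X"
    then obtain g where g: "g \<in> carrier G" "X \<inter> ball y \<delta> \<subseteq> {z \<in> X. act g z \<in> U}"
      using \<delta> by blast
    then have "act g ` ballX X y \<delta> \<subseteq> U"
      unfolding ballX_def by auto
    then show "\<exists>g\<in>carrier G. act g ` ballX X y \<delta> \<subseteq> U"
      using g(1) by blast
  qed
qed

lemma RP_perturbation_in_one_ball:
  assumes "tds G act X" "x \<in> RP K G act X" "r > 0" "K \<ge> 1"
  obtains x' g where "g \<in> carrier G"
    "\<And>k. k \<in> {1..K} \<Longrightarrow> x' k \<in> ballX X (x k) r"
    "\<And>k. k \<in> {1..K} \<Longrightarrow> act g (x' k) \<in> ballX X (act g (x' 1)) r"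
proof -
  have "r/2 > 0"
    using assms(3) by simp
  then obtain x' g where g: "g \<in> carrier G"
    and x': "\<forall>k\<in>{1..K}. x' k \<in> X \<and> dist (x k) (x' k) \<le> r/2"
    and prox: "\<forall>k1\<in>{1..K}. \<forall>k2\<in>{1..K}. k1 \<le> k2 \<longrightarrow> dist (act g (x' k1)) (act g (x' k2)) \<le> r/2"
    using assms(2) unfolding RP_def by blast
  show thesis
  proof (rule that[OF g])
    fix k assume k: "k \<in> {1..K}"
    then show "x' k \<in> ballX X (x k) r"
      using x' \<open>r > 0\<close> unfolding ballX_def by force
    have "1 \<in> {1..K}"
      using assms(4) by simp
    then show "act g (x' k) \<in> ballX X (act g (x' 1)) r"
      using prox k x' \<open>r > 0\<close> tds_act_in[OF assms(1) g] unfolding ballX_def by force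
  qed
qed

theorem lemma2p4:
  fixes G :: "('g, 'b) monoid_scheme" and act :: "'g \<Rightarrow> 'x::metric_space \<Rightarrow> 'x"
    and X :: "'x set" and K :: nat and x :: "nat \<Rightarrow> 'x"
  assumes "minimal_tds G act X"
    and "K \<ge> 2"
    and "x \<in> RP K G act X"
    and "\<epsilon> > 0"
    and "openin (top_of_set X) U" and "U \<noteq> {}"
  shows "\<exists>h\<in>carrier G. \<exists>V. \<forall>k\<in>{1..K}.
           openin (top_of_set X) (V k) \<and> V k \<noteq> {} \<and> V k \<subseteq> ballX X (x k) \<epsilon> \<and>
           act h ` V k \<subseteq> U"
proof -
  have tds: "tds G act X"
    using assms(1) by (rule minimal_tds_imp_tds)
  obtain \<delta> where "\<delta> > 0" and \<delta>: "\<And>y. y \<in> X \<Longrightarrow> \<exists>g\<in>carrier G. act g ` ballX X y \<delta> \<subseteq> U"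
    using minimal_tds_uniform_return[OF assms(1,5,6)] by blast
  have "min \<epsilon> \<delta> > 0" "K \<ge> 1"
    using \<open>\<delta> > 0\<close> assms(2,4) by auto
  then obtain x' g where g: "g \<in> carrier G"
    and x': "\<And>k. k \<in> {1..K} \<Longrightarrow> x' k \<in> ballX X (x k) (min \<epsilon> \<delta>)"
    and prox: "\<And>k. k \<in> {1..K} \<Longrightarrow> act g (x' k) \<in> ballX X (act g (x' 1)) (min \<epsilon> \<delta>)"
    by (rule RP_perturbation_in_one_ball[OF tds assms(3)]) blast
  have "act g (x' 1) \<in> X"
    using prox[of 1] assms(2) unfolding ballX_def by simp
  then obtain g\<^sub>0 where g\<^sub>0: "g\<^sub>0 \<in> carrier G" "act g\<^sub>0 ` ballX X (act g (x' 1)) \<delta> \<subseteq> U"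
    using \<delta> by blast
  define h where "h = g\<^sub>0 \<otimes>\<^bsub>G\<^esub> g"
  have h: "h \<in> carrier G"
    unfolding h_def using tds_mult_closed[OF tds g\<^sub>0(1) g] .
  have "x' k \<in> ballX X (x k) \<epsilon> \<inter> {y \<in> X. act h y \<in> U}" if k: "k \<in> {1..K}" for k
    using x'[OF k] prox[OF k] g\<^sub>0(2) tds_act_mult[OF tds g\<^sub>0(1) g]
    unfolding h_def ballX_def by fastforce
  then show ?thesis
    using h openin_ballX tds_openin_preimage[OF tds h assms(5)]
    by (intro bexI[of _ h] exI[of _ "\<lambda>k. ballX X (x k) \<epsilon> \<inter> {y \<in> X. act h y \<in> U}"]) blast
qed

end
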